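(* Let $s$ be a Sturmian word. Then there exists a coloring $c:\mathcal F^+ s\to\{0,1,2\}$ of the non-empty factors of $s$ such that for every factorization $s=V_1V_2\cdots V_n\cdots$ of $s$ into non-empty factors $V_i$, there exist integers $i,j$ with $c(V_i)\neq c(V_j)$. (For instance, $c(V)=0$ if $V$ is not a prefix of $s$, $c(V)=1$ if $V$ is a prefix of $s$ with $r_s(V)=a$, and $c(V)=2$ if $V$ is a prefix of $s$ with $r_s(V)=b$.)
   Context: A Sturmian word is an infinite word $s\in\{a,b\}^{\omega}$ that is aperiodic (not ultimately periodic) and balanced: for all factors $u,v$ of $s$ with $|u|=|v|$ one has $||u|_x-|v|_x|\le 1$ for $x\in\{a,b\}$, where $|u|_x$ is the number of occurrences of $x$ in $u$. $\mathcal F^+ s$ is the set of non-empty factors of $s$. A non-empty factor $w$ of $s$ is rich in the letter $z\in\{a,b\}$ if there is a factor $v$ of $s$ with $|v|=|w|$ and $|w|_z>|v|_z$; every non-empty factor of a Sturmian word is rich in exactly one letter, and $r_s(w)\in\{a,b\}$ denotes that letter. *)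

theory Defs
  imports Main
begin

datatype letter = La | Lb

definition factors :: "(nat \<Rightarrow> letter) \<Rightarrow> letter list set" where
  "factors s = {u. \<exists>i. u = map s [i..<i + length u]}"

definition nonempty_factors :: "(nat \<Rightarrow> letter) \<Rightarrow> letter list set" where
  "nonempty_factors s = {u \<in> factors s. u \<noteq> []}"

definition balanced :: "(nat \<Rightarrow> letter) \<Rightarrow> bool" where
  "balanced s \<longleftrightarrow> (\<forall>u v x. u \<in> factors s \<longrightarrow> v \<in> factors s \<longrightarrow> length u = length v \<longrightarrow>
      \<bar>int (count_list u x) - int (count_list v x)\<bar> \<le> 1)"

definition ultimately_periodic :: "(nat \<Rightarrow> letter) \<Rightarrow> bool" where
  "ultimately_periodic s \<longleftrightarrow> (\<exists>p>0. \<exists>N. \<forall>n\<ge>N. s (n + p) = s n)"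

definition sturmian :: "(nat \<Rightarrow> letter) \<Rightarrow> bool" where
  "sturmian s \<longleftrightarrow> \<not> ultimately_periodic s \<and> balanced s"

text \<open>s = V 0 V 1 V 2 ... with every V i non-empty: the i-th block occupies
  positions starting at the total length of the previous blocks.\<close>
definition factorization :: "(nat \<Rightarrow> letter list) \<Rightarrow> (nat \<Rightarrow> letter) \<Rightarrow> bool" where
  "factorization V s \<longleftrightarrow> (\<forall>i. V i \<noteq> [] \<and>
      V i = map s [(\<Sum>k<i. length (V k)) ..< (\<Sum>k<i. length (V k)) + length (V i)])"

end

theory Submission
  imports Defs
begin

text \<open>In a monochromatic factorization every block is a prefix
  of s whose count of one fixed letter x is maximal among the factors of its length.
  Comparing the windows that start at consecutive block boundaries shows that their
  x-counts decrease; since s is aperiodic they eventually fall below the prefix count for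
  some length L, which bounds all later block lengths. So some block length m recurs
  infinitely often, and balancedness then forces every window of length j m to contain at
  least j M - 1 letters x, where M is the x-count of the prefix of length m. Hence two
  windows of length m with fewer than M letters x cannot start at positions congruent
  mod m, so eventually every window of length m contains exactly M letters x, which makes
  s ultimately periodic with period m.\<close>

definition window_count :: "(nat \<Rightarrow> 'a) \<Rightarrow> 'a \<Rightarrow> nat \<Rightarrow> nat \<Rightarrow> nat" where
  "window_count s x p L = count_list (map s [p..<p + L]) x"

lemma window_count_0 [simp]: "window_count s x p 0 = 0"
  by (simp add: window_count_def)

lemma window_count_Suc [simp]:
  "window_count s x p (Suc L) = window_count s x p L + (if s (p + L) = x then 1 else 0)"
  by (simp add: window_count_def)

lemma window_count_add:
  "window_count s x p (L1 + L2) = window_count s x p L1 + window_count s x (p + L1) L2"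
  by (induction L2) (simp_all add: add.assoc)

lemma window_count_cong:
  "(\<And>l. l < L \<Longrightarrow> s (p + l) = s (q + l)) \<Longrightarrow> window_count s x p L = window_count s x q L"
  by (induction L) simp_all

lemma window_count_Suc_eq_iff:
  assumes "window_count s x p L = window_count s x q L"
    and "window_count s x p (Suc L) = window_count s x q (Suc L)"
  shows "s (p + L) = x \<longleftrightarrow> s (q + L) = x"
  using assms by (simp split: if_splits)

lemma window_count_shift_eq_iff:
  assumes "window_count s x r m = window_count s x (Suc r) m"
  shows "s (r + m) = x \<longleftrightarrow> s r = x"
proof -
  have "window_count s x r (Suc m) = window_count s x r m + (if s (r + m) = x then 1 else 0)"
    by simp
  moreover have "window_count s x r (Suc m) = (if s r = x then 1 else 0) + window_count s x (Suc r) m"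
    using window_count_add[of s x r 1 m] by simp
  ultimately show ?thesis
    using assms by (simp split: if_splits)
qed

definition prefix_maximal :: "(nat \<Rightarrow> 'a) \<Rightarrow> 'a \<Rightarrow> nat \<Rightarrow> bool" where
  "prefix_maximal s x L \<longleftrightarrow> (\<forall>q. window_count s x q L \<le> window_count s x 0 L)"

lemma window_count_sum_le:
  assumes "finite I" and "\<forall>i\<in>I. prefix_maximal s x (f i)"
  shows "window_count s x p (\<Sum>i\<in>I. f i) \<le> (\<Sum>i\<in>I. window_count s x 0 (f i))"
  using assms
proof (induction I arbitrary: p rule: finite_induct)
  case empty
  then show ?case by simp
next
  case (insert a I)
  have "window_count s x p (\<Sum>i\<in>insert a I. f i)
      = window_count s x p (f a) + window_count s x (p + f a) (\<Sum>i\<in>I. f i)"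
    using insert.hyps by (simp add: window_count_add)
  also have "\<dots> \<le> window_count s x 0 (f a) + (\<Sum>i\<in>I. window_count s x 0 (f i))"
    using insert.prems insert.IH by (intro add_mono) (auto simp: prefix_maximal_def)
  finally show ?case
    using insert.hyps by simp
qed

lemma window_count_mult_le:
  assumes "prefix_maximal s x m"
  shows "window_count s x p (k * m) \<le> k * window_count s x 0 m"
  using window_count_sum_le[of "{..<k}" s x "\<lambda>_. m" p] assms by simp

definition block_start :: "(nat \<Rightarrow> nat) \<Rightarrow> nat \<Rightarrow> nat" where
  "block_start n i = (\<Sum>k<i. n k)"

lemma block_start_0 [simp]: "block_start n 0 = 0"
  by (simp add: block_start_def)

lemma block_start_Suc [simp]: "block_start n (Suc i) = block_start n i + n i"
  by (simp add: block_start_def)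

locale prefix_maximal_blocks =
  fixes s :: "nat \<Rightarrow> 'a" and x :: 'a and n :: "nat \<Rightarrow> nat"
  assumes block_pos: "0 < n i"
    and block_prefix: "l < n i \<Longrightarrow> s (block_start n i + l) = s l"
    and block_maximal: "prefix_maximal s x (n i)"
    and count_balanced: "window_count s x p L \<le> window_count s x q L + 1"
begin

abbreviation cnt :: "nat \<Rightarrow> nat \<Rightarrow> nat" where
  "cnt \<equiv> window_count s x"

abbreviation t :: "nat \<Rightarrow> nat" where
  "t \<equiv> block_start n"

lemma count_block: "cnt (t i) (n i) = cnt 0 (n i)"
  by (rule window_count_cong) (simp add: block_prefix)

lemma count_next_block_le: "cnt (t (Suc i)) L \<le> cnt (t i) L"
proof -
  have "cnt (t i) (n i + L) = cnt 0 (n i) + cnt (t (Suc i)) L"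
    by (simp add: window_count_add count_block)
  moreover have "cnt (t i) (L + n i) = cnt (t i) L + cnt (t i + L) (n i)"
    by (simp add: window_count_add)
  moreover have "cnt (t i + L) (n i) \<le> cnt 0 (n i)"
    using block_maximal by (simp add: prefix_maximal_def)
  ultimately show ?thesis
    by (simp add: add.commute)
qed

lemma count_later_block_le: "i \<le> j \<Longrightarrow> cnt (t j) L \<le> cnt (t i) L"
proof (induction j rule: dec_induct)
  case (step j)
  from count_next_block_le[of j L] step.IH show ?case
    by (rule order_trans)
qed simp

lemma later_blocks_shorter:
  assumes "cnt (t 1) L < cnt 0 L" and "1 \<le> i"
  shows "n i < L"
proof (rule ccontr)
  assume "\<not> n i < L"
  then have "cnt (t i) L = cnt 0 L"
    by (intro window_count_cong) (simp add: block_prefix)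
  with count_later_block_le[OF \<open>1 \<le> i\<close>, of L] assms(1) show False
    by simp
qed

lemma count_prefix_of_blocks: "cnt 0 (t k) = (\<Sum>i<k. cnt 0 (n i))"
  by (induction k) (simp_all add: window_count_add count_block)

lemma count_lower_bound_frequently:
  assumes "infinite {i. n i = m}"
  shows "\<exists>j\<ge>J. \<forall>p. j * cnt 0 m \<le> cnt p (j * m) + 1"
proof -
  obtain B where B: "finite B" "card B = J" "B \<subseteq> {i. n i = m}"
    using infinite_arbitrarily_large[OF assms] by blast
  then obtain k where "\<forall>i\<in>B. i < k"
    using finite_nat_set_iff_bounded by blast
  define A where "A = {i. i < k \<and> n i = m}"
  define R where "R = {i. i < k \<and> n i \<noteq> m}"
  have sum_split: "(\<Sum>i<k. f i) = (\<Sum>i\<in>A. f i) + (\<Sum>i\<in>R. f i)" for f :: "nat \<Rightarrow> nat"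
  proof -
    have "{..<k} = A \<union> R" "A \<inter> R = {}"
      by (auto simp: A_def R_def)
    then show ?thesis
      by (simp add: sum.union_disjoint A_def R_def)
  qed
  have "J \<le> card A"
    using B \<open>\<forall>i\<in>B. i < k\<close> by (auto simp: A_def intro: card_mono[of A B, simplified])
  moreover have "card A * cnt 0 m \<le> cnt p (card A * m) + 1" for p
  proof -
    have "card A * cnt 0 m + (\<Sum>i\<in>R. cnt 0 (n i)) = cnt 0 (t k)"
      by (simp add: count_prefix_of_blocks sum_split[of "\<lambda>i. cnt 0 (n i)"] A_def)
    also have "\<dots> \<le> cnt p (t k) + 1"
      by (rule count_balanced)
    also have "t k = card A * m + (\<Sum>i\<in>R. n i)"
      by (simp add: block_start_def sum_split[of n] A_def)
    also have "cnt p (card A * m + (\<Sum>i\<in>R. n i))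
        = cnt p (card A * m) + cnt (p + card A * m) (\<Sum>i\<in>R. n i)"
      by (rule window_count_add)
    also have "cnt (p + card A * m) (\<Sum>i\<in>R. n i) \<le> (\<Sum>i\<in>R. cnt 0 (n i))"
      using block_maximal by (intro window_count_sum_le) (auto simp: R_def)
    finally show ?thesis
      by simp
  qed
  ultimately show ?thesis
    by blast
qed

lemma recurrent_length_prefix_maximal:
  assumes "infinite {i. n i = m}"
  shows "prefix_maximal s x m" and "0 < m"
proof -
  obtain i where "n i = m"
    using not_finite_existsD[OF assms] by blast
  then show "prefix_maximal s x m" and "0 < m"
    using block_maximal block_pos by blast+
qed

lemma count_lower_bound:
  assumes "infinite {i. n i = m}"
  shows "j * cnt 0 m \<le> cnt p (j * m) + 1"
proof -
  note max = recurrent_length_prefix_maximal(1)[OF assms]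
  obtain j' where "j \<le> j'" and j': "j' * cnt 0 m \<le> cnt p (j' * m) + 1"
    using count_lower_bound_frequently[OF assms] by blast
  then obtain d where d: "j' = j + d"
    using le_Suc_ex by blast
  have "cnt p (j' * m) = cnt p (j * m) + cnt (p + j * m) (d * m)"
    by (simp add: d add_mult_distrib window_count_add)
  also have "cnt (p + j * m) (d * m) \<le> d * cnt 0 m"
    using max by (rule window_count_mult_le)
  finally show ?thesis
    using j' by (simp add: d add_mult_distrib)
qed

lemma deficient_windows_finite:
  assumes "infinite {i. n i = m}"
  shows "finite {r. cnt r m < cnt 0 m}" (is "finite ?D")
proof -
  note max = recurrent_length_prefix_maximal(1)[OF assms]
  have "0 < m"
    using assms by (rule recurrent_length_prefix_maximal(2))
  have separated: "r1 mod m \<noteq> r2 mod m" if "r1 \<in> ?D" "r2 \<in> ?D" "r1 < r2" for r1 r2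
  proof
    assume "r1 mod m = r2 mod m"
    then obtain d where d: "r2 = r1 + m * d"
      using \<open>r1 < r2\<close> by (auto elim: mod_eq_nat2E)
    then obtain l where l: "r2 = r1 + m + l * m"
      using \<open>r1 < r2\<close> by (cases d) (auto simp: mult.commute)
    have "cnt r1 (m + l * m + m) = cnt r1 m + cnt (r1 + m) (l * m) + cnt r2 m"
      by (simp only: l window_count_add add.assoc)
    also have "cnt (r1 + m) (l * m) \<le> l * cnt 0 m"
      using max by (rule window_count_mult_le)
    finally have "cnt r1 (m + l * m + m) + 2 \<le> cnt 0 m + l * cnt 0 m + cnt 0 m"
      using that(1,2) by simp
    moreover have "m + l * m + m = Suc (Suc l) * m"
      by simp
    ultimately show False
      using count_lower_bound[OF assms, of "Suc (Suc l)" r1] by simp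
  qed
  have "inj_on (\<lambda>r. r mod m) ?D"
  proof (rule inj_onI)
    fix r1 r2
    assume "r1 \<in> ?D" "r2 \<in> ?D" "r1 mod m = r2 mod m"
    then show "r1 = r2"
      using separated[of r1 r2] separated[of r2 r1] by (cases r1 r2 rule: linorder_cases) auto
  qed
  then show ?thesis
    by (rule inj_on_finite[of _ _ "{..<m}"]) (use \<open>0 < m\<close> in auto)
qed

lemma recurrent_block_length_period:
  assumes "infinite {i. n i = m}"
  shows "\<exists>N. \<forall>r\<ge>N. s (r + m) = x \<longleftrightarrow> s r = x"
proof -
  note max = recurrent_length_prefix_maximal(1)[OF assms]
  obtain N where N: "\<forall>r. cnt r m < cnt 0 m \<longrightarrow> r < N"
    using deficient_windows_finite[OF assms] by (auto simp: finite_nat_set_iff_bounded)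
  have eq: "cnt r m = cnt 0 m" if "N \<le> r" for r
    using N[rule_format, of r] max[unfolded prefix_maximal_def, rule_format, of r] that by linarith
  have "s (r + m) = x \<longleftrightarrow> s r = x" if "N \<le> r" for r
  proof (rule window_count_shift_eq_iff[of s x r m])
    show "cnt r m = cnt (Suc r) m"
      using eq[OF that] eq[OF le_SucI[OF that]] by (rule trans[OF _ sym])
  qed
  then show ?thesis
    by blast
qed

theorem indicator_ultimately_periodic: "\<exists>p>0. \<exists>N. \<forall>r\<ge>N. s (r + p) = x \<longleftrightarrow> s r = x"
proof (cases "\<forall>L. cnt (t 1) L = cnt 0 L")
  case True
  have t1: "t 1 = n 0"
    by (simp add: block_start_def)
  have "s (n 0 + r) = x \<longleftrightarrow> s (0 + r) = x" for r
    using True[rule_format, of r] True[rule_format, of "Suc r"] unfolding t1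
    by (rule window_count_Suc_eq_iff)
  then have "s (r + n 0) = x \<longleftrightarrow> s r = x" for r
    by (metis add.commute add_0)
  with block_pos[of 0] show ?thesis
    by (intro exI[of _ "n 0"] conjI exI[of _ 0] allI impI)
next
  case False
  then obtain L where "cnt (t 1) L \<noteq> cnt 0 L"
    by blast
  moreover have "cnt (t 1) L \<le> cnt 0 L"
    using count_later_block_le[of 0 1 L] by simp
  ultimately have L: "cnt (t 1) L < cnt 0 L"
    by linarith
  have "n i \<le> max (n 0) L" for i
    using later_blocks_shorter[OF L, of i] by (cases "i = 0") auto
  then have "range n \<subseteq> {..max (n 0) L}"
    by auto
  then have "finite (range n)"
    by (rule finite_subset) simp
  then obtain m where "infinite (n -` {m})"
    by (rule inf_img_fin_domE[OF _ infinite_UNIV_nat])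
  then have recurrent: "infinite {i. n i = m}"
    by (simp add: vimage_def)
  then have "0 < m"
    by (rule recurrent_length_prefix_maximal(2))
  moreover obtain N where "\<forall>r\<ge>N. s (r + m) = x \<longleftrightarrow> s r = x"
    using recurrent_block_length_period[OF recurrent] by blast
  ultimately show ?thesis
    by blast
qed

end

lemma window_in_factors: "map s [p..<p + L] \<in> factors s"
  unfolding factors_def by auto

lemma balanced_window_count:
  assumes "balanced s"
  shows "window_count s x p L \<le> window_count s x q L + 1"
proof -
  have "\<bar>int (count_list (map s [p..<p + L]) x) - int (count_list (map s [q..<q + L]) x)\<bar> \<le> 1"
    using assms window_in_factors[of s p L] window_in_factors[of s q L] unfolding balanced_def
    by (elim allE[of _ "map s [p..<p + L]"] allE[of _ "map s [q..<q + L]"] allE[of _ x]) simp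
  then show ?thesis
    by (simp add: window_count_def)
qed

lemma window_count_La_Lb: "window_count s La p L + window_count s Lb p L = L"
proof (induction L)
  case (Suc L)
  then show ?case
    by (cases "s (p + L)") simp_all
qed simp

lemma letter_eq_if_same_indicator:
  fixes x y z :: letter
  shows "(y = x \<longleftrightarrow> z = x) \<Longrightarrow> y = z"
  by (cases x; cases y; cases z) simp_all

lemma ultimately_periodic_if_indicator:
  fixes s :: "nat \<Rightarrow> letter"
  assumes "0 < p" and "\<forall>r\<ge>N. s (r + p) = x \<longleftrightarrow> s r = x"
  shows "ultimately_periodic s"
proof -
  have "s (r + p) = s r" if "N \<le> r" for r
    by (rule letter_eq_if_same_indicator[where x = x]) (use assms(2) that in simp)
  with assms(1) show ?thesis
    unfolding ultimately_periodic_def by blast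
qed

definition rich_in :: "(nat \<Rightarrow> letter) \<Rightarrow> letter list \<Rightarrow> letter \<Rightarrow> bool" where
  "rich_in s w z \<longleftrightarrow> (\<exists>v\<in>factors s. length v = length w \<and> count_list v z < count_list w z)"

lemma rich_prefix_maximal:
  assumes "balanced s" and "rich_in s (map s [0..<L]) z"
  shows "prefix_maximal s z L"
proof -
  obtain p where less: "window_count s z p L < window_count s z 0 L"
    using assms(2) unfolding rich_in_def factors_def window_count_def by fastforce
  have "window_count s z q L \<le> window_count s z 0 L" for q
    using balanced_window_count[OF assms(1), of z q L p] less by linarith
  then show ?thesis
    unfolding prefix_maximal_def by blast
qed

lemma not_rich_prefix_maximal:
  assumes "\<not> rich_in s (map s [0..<L]) La"
  shows "prefix_maximal s Lb L"
proof -
  have La_le: "window_count s La 0 L \<le> window_count s La q L" for q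
    using assms window_in_factors[of s q L] unfolding rich_in_def window_count_def by fastforce
  have "window_count s Lb q L \<le> window_count s Lb 0 L" for q
    using La_le[of q] window_count_La_Lb[of s q L] window_count_La_Lb[of s 0 L] by linarith
  then show ?thesis
    unfolding prefix_maximal_def by blast
qed

definition prefix_colouring :: "(nat \<Rightarrow> letter) \<Rightarrow> letter list \<Rightarrow> nat" where
  "prefix_colouring s w =
    (if w = map s [0..<length w] then if rich_in s w La then 1 else 2 else 0)"

lemma monochromatic_factorization_blocks:
  assumes "balanced s" and "factorization V s"
    and mono: "\<And>i. prefix_colouring s (V i) = prefix_colouring s (V 0)"
  shows "\<exists>x. prefix_maximal_blocks s x (\<lambda>i. length (V i))"
proof -
  define n where "n = (\<lambda>i. length (V i))"
  have V: "V i = map s [block_start n i..<block_start n i + n i]" and pos: "0 < n i" for i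
    using assms(2) unfolding factorization_def block_start_def n_def by auto
  have "prefix_colouring s (V 0) \<noteq> 0"
    using V[of 0] by (simp add: prefix_colouring_def n_def)
  have prefix: "V i = map s [0..<n i]" for i
  proof (rule ccontr)
    assume "V i \<noteq> map s [0..<n i]"
    then have "prefix_colouring s (V i) = 0"
      by (simp add: prefix_colouring_def n_def)
    with mono[of i] \<open>prefix_colouring s (V 0) \<noteq> 0\<close> show False
      by simp
  qed
  have block_prefix: "s (block_start n i + l) = s l" if "l < n i" for i l
  proof -
    have "map s [block_start n i..<block_start n i + n i] ! l = map s [0..<n i] ! l"
      using V[of i] prefix[of i] by simp
    with that show ?thesis
      by simp
  qed
  have colour: "prefix_colouring s (V i) = (if rich_in s (V i) La then 1 else 2)" for i
    using prefix[of i] unfolding prefix_colouring_def n_def by (rule if_P)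
  have rich_iff: "rich_in s (V i) La \<longleftrightarrow> rich_in s (V 0) La" for i
    using mono[of i] unfolding colour[of i] colour[of 0] by (simp split: if_splits)
  define x where "x = (if rich_in s (V 0) La then La else Lb)"
  have maximal: "prefix_maximal s x (n i)" for i
  proof (cases "rich_in s (V 0) La")
    case True
    with rich_iff[of i, unfolded prefix[of i]] show ?thesis
      using rich_prefix_maximal[OF assms(1)] by (simp add: x_def)
  next
    case False
    with rich_iff[of i, unfolded prefix[of i]] show ?thesis
      using not_rich_prefix_maximal by (simp add: x_def)
  qed
  have "prefix_maximal_blocks s x n"
    unfolding prefix_maximal_blocks_def
    using pos block_prefix maximal balanced_window_count[OF assms(1)] by blast
  then show ?thesis
    unfolding n_def by blast
qed

theorem mainTheorem8:
  fixes s :: "nat \<Rightarrow> letter"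
  assumes "sturmian s"
  shows "\<exists>c :: letter list \<Rightarrow> nat. (\<forall>w \<in> nonempty_factors s. c w \<in> {0, 1, 2}) \<and>
           (\<forall>V. factorization V s \<longrightarrow> (\<exists>i j. c (V i) \<noteq> c (V j)))"
proof -
  have balanced: "balanced s" and aperiodic: "\<not> ultimately_periodic s"
    using assms by (simp_all add: sturmian_def)
  show ?thesis
  proof (intro exI[of _ "prefix_colouring s"] conjI ballI allI impI)
    show "prefix_colouring s w \<in> {0, 1, 2}" for w
      by (simp add: prefix_colouring_def)
  next
    fix V
    assume factorization: "factorization V s"
    show "\<exists>i j. prefix_colouring s (V i) \<noteq> prefix_colouring s (V j)"
    proof (rule ccontr)
      assume "\<nexists>i j. prefix_colouring s (V i) \<noteq> prefix_colouring s (V j)"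
      then obtain x where "prefix_maximal_blocks s x (\<lambda>i. length (V i))"
        using monochromatic_factorization_blocks[OF balanced factorization] by blast
      then have "\<exists>p>0. \<exists>N. \<forall>r\<ge>N. s (r + p) = x \<longleftrightarrow> s r = x"
        by (rule prefix_maximal_blocks.indicator_ultimately_periodic)
      with aperiodic show False
        using ultimately_periodic_if_indicator by blast
    qed
  qed
qed

end
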